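(* Let $\mathcal N$ be a finite set, $q$ a prime power, and $h\in\mathcal H[\mathcal N]$ almost $q$-representable. Let $\Delta=\{(k,\alpha):k\in\mathcal N,\ \alpha\subseteq\mathcal N,\ h(k\mid\alpha)=0\}$. Then there exists a sequence of weakly $q$-representable functions $h^\ell\in\mathcal H[\mathcal N]$ such that $\lim_{\ell\to\infty}h^\ell=h$ and $h^\ell(k\mid\alpha)=0$ for all positive integers $\ell$ and all $(k,\alpha)\in\Delta$.
   Context: $\mathcal H[\mathcal N]$ is the set of real functions on subsets of $\mathcal N$, with $h(\alpha\mid\beta)=h(\alpha\cup\beta)-h(\beta)$ and singletons identified with elements. $h$ is $q$-representable if there are subspaces $\mathbb U_i$ ($i\in\mathcal N$) of a finite-dimensional vector space over $GF(q)$ with $h(\alpha)=\dim\langle\mathbb U_i:i\in\alpha\rangle$ (dimension of the span) for every $\alpha\subseteq\mathcal N$; weakly $q$-representable if $ch$ is $q$-representable for some $c>0$; almost $q$-representable if it is the limit of a sequence of weakly $q$-representable functions. (In the paper $\mathcal N=\mathcal S\cup\mathcal E$ for a network coding problem.) *)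

theory Defs
  imports Complex_Main "HOL-Library.Function_Algebras"
begin

text \<open>Vectors over a field 'a are modelled as functions nat => 'a with pointwise
  operations; the n-dimensional coordinate space 'a^n is the set of such functions
  vanishing outside {..<n}.\<close>

definition fscale :: "'a::field \<Rightarrow> (nat \<Rightarrow> 'a) \<Rightarrow> (nat \<Rightarrow> 'a)" where
  "fscale c v = (\<lambda>i. c * v i)"

definition coord_space :: "nat \<Rightarrow> (nat \<Rightarrow> 'a::zero) set" where
  "coord_space n = {v. \<forall>i\<ge>n. v i = 0}"

definition cond_val :: "('n set \<Rightarrow> real) \<Rightarrow> 'n set \<Rightarrow> 'n set \<Rightarrow> real" where
  "cond_val h \<alpha> \<beta> = h (\<alpha> \<union> \<beta>) - h \<beta>"

text \<open>Representability over the finite field given by the type 'a (i.e. GF(q) with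
  q = CARD('a)). Only the values of h on subsets of N matter.\<close>
definition representable ::
  "'a::field itself \<Rightarrow> 'n set \<Rightarrow> ('n set \<Rightarrow> real) \<Rightarrow> bool" where
  "representable _ N h \<longleftrightarrow>
     (\<exists>(n::nat) (U :: 'n \<Rightarrow> (nat \<Rightarrow> 'a) set).
        (\<forall>i\<in>N. module.subspace (fscale :: 'a \<Rightarrow> _) (U i) \<and> U i \<subseteq> coord_space n) \<and>
        (\<forall>\<alpha>\<subseteq>N. h \<alpha> = real (vector_space.dim (fscale :: 'a \<Rightarrow> _) (\<Union>i\<in>\<alpha>. U i))))"

definition weakly_representable ::
  "'a::field itself \<Rightarrow> 'n set \<Rightarrow> ('n set \<Rightarrow> real) \<Rightarrow> bool" where
  "weakly_representable F N h \<longleftrightarrow> (\<exists>c>0. representable F N (\<lambda>\<alpha>. c * h \<alpha>))"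

definition converges_on :: "'n set \<Rightarrow> (nat \<Rightarrow> 'n set \<Rightarrow> real) \<Rightarrow> ('n set \<Rightarrow> real) \<Rightarrow> bool" where
  "converges_on N g h \<longleftrightarrow> (\<forall>\<alpha>\<subseteq>N. (\<lambda>l. g l \<alpha>) \<longlonglongrightarrow> h \<alpha>)"

definition almost_representable ::
  "'a::field itself \<Rightarrow> 'n set \<Rightarrow> ('n set \<Rightarrow> real) \<Rightarrow> bool" where
  "almost_representable F N h \<longleftrightarrow>
     (\<exists>g. (\<forall>l. weakly_representable F N (g l)) \<and> converges_on N g h)"

end

theory Submission
  imports Defs
begin

text \<open>Let g be a weakly representable approximation of h, realised after scaling by c by
  subspaces U_i of a coordinate space. For each (k, alpha) in Delta, a basis of U_alpha extends to
  one of U_k + U_alpha by c * g(k | alpha) vectors. A linear map P killing the span W of all these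
  vectors maps U_k into the span of P U_alpha, so the function given by the subspaces P U_i has
  vanishing conditional values on Delta; and it loses at most dim W, that is at most the sum of
  c * g(k | alpha) over Delta, on every union. As g tends to h, this sum tends to the sum of the
  h(k | alpha), which is 0.\<close>

context vector_space begin

text \<open>The ambient space need not be finite-dimensional (below it is nat => 'a), and dim is
  meaningless on sets of infinite dimension; hence the hypotheses that sets lie in the span of a
  finite set E.\<close>

lemma finite_basis_in_span:
  assumes "finite E" and "S \<subseteq> span E"
  obtains B where "B \<subseteq> S" "independent B" "S \<subseteq> span B" "card B = dim S" "finite B"
proof -
  obtain B where B: "B \<subseteq> S" "independent B" "S \<subseteq> span B" "card B = dim S"
    by (rule basis_exists)
  moreover have "finite B"
    using independent_span_bound[OF assms(1) B(2)] B(1) assms(2) by blast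
  ultimately show thesis by (rule that)
qed

lemma dim_mono_in_span:
  assumes "finite E" and "T \<subseteq> span E" and "S \<subseteq> T"
  shows "dim S \<le> dim T"
proof -
  obtain A where A: "A \<subseteq> S" "independent A" "card A = dim S"
    by (rule basis_exists) blast
  obtain B where B: "A \<subseteq> B" "B \<subseteq> T" "independent B" "T \<subseteq> span B"
    using maximal_independent_subset_extend[of A T] A(1,2) assms(3) by blast
  have "finite B"
    using independent_span_bound[OF assms(1) B(3)] B(2) assms(2) by blast
  then have "card A \<le> card B" using B(1) by (rule card_mono)
  then show ?thesis using A(3) basis_card_eq_dim[OF B(2,4,3)] by simp
qed

lemma dim_Un_eq_if_subset_span:
  assumes "A \<subseteq> span B"
  shows "dim (A \<union> B) = dim B"
proof (rule span_eq_dim)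
  show "span (A \<union> B) = span B"
    using assms span_superset[of B] by (intro span_eq[THEN iffD2]) (auto intro: span_mono[THEN subsetD])
qed

lemma exists_spanning_complement:
  assumes "finite E" and "A \<union> Y \<subseteq> span E"
  obtains T where "finite T" "T \<subseteq> A \<union> Y" "card T + dim Y = dim (A \<union> Y)" "A \<subseteq> span (Y \<union> T)"
proof -
  obtain B where B: "B \<subseteq> Y" "independent B" "Y \<subseteq> span B" "card B = dim Y"
    by (rule basis_exists)
  obtain B' where B': "B \<subseteq> B'" "B' \<subseteq> A \<union> Y" "independent B'" "A \<union> Y \<subseteq> span B'"
    using maximal_independent_subset_extend[of B "A \<union> Y"] B(1,2) by blast
  have "finite B'"
    using independent_span_bound[OF assms(1) B'(3)] B'(2) assms(2) by blast
  have "card (B' - B) + card B = card B'"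
    using card_Diff_subset[OF finite_subset[OF B'(1) \<open>finite B'\<close>] B'(1)]
      card_mono[OF \<open>finite B'\<close> B'(1)] by simp
  moreover have "A \<subseteq> span (Y \<union> (B' - B))"
    using B'(4) span_mono[of B' "Y \<union> (B' - B)"] B(1) by blast
  ultimately show thesis
    using that[of "B' - B"] \<open>finite B'\<close> B'(2) B(4) basis_card_eq_dim[OF B'(2,4,3)] by auto
qed

lemma exists_linear_annihilating_span:
  obtains P where "Vector_Spaces.linear scale scale P" "\<And>x. x \<in> span W \<Longrightarrow> P x = 0" "\<And>x. x - P x \<in> span W"
proof -
  interpret pair: vector_space_pair scale scale ..
  obtain B where B: "B \<subseteq> W" "independent B" "W \<subseteq> span B"
    by (rule basis_exists) blast
  define Q where "Q = pair.construct B id"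
  have "Vector_Spaces.linear scale scale Q" unfolding Q_def by (rule pair.linear_construct[OF B(2)])
  then have lin: "Vector_Spaces.linear scale scale (\<lambda>x. x - Q x)"
    by (rule pair.linear_compose_sub[OF module_hom_ident])
  have "span W = span B"
    using B(1,3) span_superset[of W] by (intro span_eq[THEN iffD2]) blast
  moreover have "Q x \<in> span B" for x
    using pair.construct_in_span[OF B(2), of id] unfolding Q_def by simp
  moreover have "x - Q x = 0" if "x \<in> span B" for x
    using pair.linear_eq_0_on_span[OF lin _ that] pair.construct_basis[OF B(2)] unfolding Q_def by simp
  ultimately show thesis by (intro that[OF lin]) auto
qed

lemma dim_linear_image_le:
  assumes "Vector_Spaces.linear scale scale P" and "finite E" and "S \<subseteq> span E"
  shows "dim (P ` S) \<le> dim S"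
proof -
  interpret pair: vector_space_pair scale scale ..
  obtain B where B: "S \<subseteq> span B" "card B = dim S" "finite B"
    using finite_basis_in_span[OF assms(2,3)] by metis
  have "P ` S \<subseteq> span (P ` B)"
    using B(1) pair.linear_span_image[OF assms(1), of B] by blast
  then have "dim (P ` S) \<le> card (P ` B)" using dim_le_card B(3) by blast
  also have "\<dots> \<le> dim S" using card_image_le[OF B(3)] B(2) by simp
  finally show ?thesis .
qed

lemma dim_le_dim_linear_image_add_card:
  assumes "Vector_Spaces.linear scale scale P" and "finite E" and "S \<subseteq> span E"
    and "finite W" and "\<And>x. x \<in> S \<Longrightarrow> x - P x \<in> span W"
  shows "dim S \<le> dim (P ` S) + card W"
proof -
  interpret pair: vector_space_pair scale scale ..
  have "P ` S \<subseteq> span (P ` E)"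
    using assms(3) pair.linear_span_image[OF assms(1), of E] by blast
  then obtain A where "A \<subseteq> P ` S" "independent A" and A: "P ` S \<subseteq> span A" "card A = dim (P ` S)" "finite A"
    by (rule finite_basis_in_span[OF finite_imageI[OF assms(2)]])
  have "S \<subseteq> span (A \<union> W)"
  proof
    fix x assume "x \<in> S"
    then have "P x \<in> span (A \<union> W)" and "x - P x \<in> span (A \<union> W)"
      using A(1) assms(5) span_mono[of A "A \<union> W"] span_mono[of W "A \<union> W"] by blast+
    from span_add[OF this] show "x \<in> span (A \<union> W)" by simp
  qed
  then have "dim S \<le> card (A \<union> W)" using dim_le_card A(3) assms(4) by blast
  also have "\<dots> \<le> dim (P ` S) + card W" using card_Un_le[of A W] A(2) by simp
  finally show ?thesis .
qed

lemma exists_linear_collapse: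
  fixes A B :: "'j \<Rightarrow> 'b set"
  assumes E: "finite E" "C \<subseteq> span E" and "subspace C"
    and "finite J" and AB: "\<And>j. j \<in> J \<Longrightarrow> A j \<union> B j \<subseteq> C"
  obtains P where "Vector_Spaces.linear scale scale P" "P ` C \<subseteq> C"
    "\<And>j. j \<in> J \<Longrightarrow> P ` A j \<subseteq> span (P ` B j)"
    "\<And>S. S \<subseteq> C \<Longrightarrow> dim (P ` S) \<le> dim S"
    "\<And>S. S \<subseteq> C \<Longrightarrow> dim S \<le> dim (P ` S) + (\<Sum>j\<in>J. dim (A j \<union> B j) - dim (B j))"
proof -
  define extends where "extends j T \<longleftrightarrow> finite T \<and> T \<subseteq> A j \<union> B j \<and>
      card T + dim (B j) = dim (A j \<union> B j) \<and> A j \<subseteq> span (B j \<union> T)" for j T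
  have extension_exists: "\<exists>T. extends j T" if "j \<in> J" for j
  proof -
    have "A j \<union> B j \<subseteq> span E" using AB[OF that] E(2) by (rule order_trans)
    then obtain T where "finite T" "T \<subseteq> A j \<union> B j" "card T + dim (B j) = dim (A j \<union> B j)"
        "A j \<subseteq> span (B j \<union> T)"
      by (rule exists_spanning_complement[OF E(1)])
    then show ?thesis unfolding extends_def by blast
  qed
  define T where "T j = (SOME T. extends j T)" for j
  have T: "extends j (T j)" if "j \<in> J" for j
    unfolding T_def by (rule someI_ex[OF extension_exists[OF that]])
  define W where "W = (\<Union>j\<in>J. T j)"
  have "finite W"
    unfolding W_def using \<open>finite J\<close> T by (auto simp: extends_def)
  have "W \<subseteq> C"
    unfolding W_def using T AB by (fastforce simp: extends_def)
  then have "span W \<subseteq> C" using \<open>subspace C\<close> by (rule span_minimal)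
  have card_W: "card W \<le> (\<Sum>j\<in>J. dim (A j \<union> B j) - dim (B j))"
  proof -
    have "card W \<le> (\<Sum>j\<in>J. card (T j))" unfolding W_def by (rule card_UN_le[OF \<open>finite J\<close>])
    also have "\<dots> = (\<Sum>j\<in>J. dim (A j \<union> B j) - dim (B j))"
      using T unfolding extends_def by (intro sum.cong refl) (metis add_diff_cancel_right')
    finally show ?thesis .
  qed
  obtain P where P: "Vector_Spaces.linear scale scale P" "\<And>x. x \<in> span W \<Longrightarrow> P x = 0"
    "\<And>x. x - P x \<in> span W"
    using exists_linear_annihilating_span[of W] by blast
  interpret pair: vector_space_pair scale scale ..
  show thesis
  proof (rule that[OF P(1)])
    show "P ` C \<subseteq> C"
    proof
      fix y assume "y \<in> P ` C"
      then obtain x where "x \<in> C" "y = x - (x - P x)" by auto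
      then show "y \<in> C"
        using P(3)[of x] \<open>span W \<subseteq> C\<close> subspace_diff[OF \<open>subspace C\<close>] by blast
    qed
  next
    fix j assume "j \<in> J"
    have "T j \<subseteq> span W" unfolding W_def using \<open>j \<in> J\<close> span_superset by blast
    then have "P ` T j \<subseteq> {0}" using P(2) by blast
    have "P ` A j \<subseteq> P ` span (B j \<union> T j)" using T[OF \<open>j \<in> J\<close>] by (auto simp: extends_def)
    also have "\<dots> = span (P ` B j \<union> P ` T j)"
      using pair.linear_span_image[OF P(1), of "B j \<union> T j"] by (simp add: image_Un)
    also have "\<dots> \<subseteq> span (P ` B j)"
    proof (rule span_minimal[OF _ subspace_span])
      show "P ` B j \<union> P ` T j \<subseteq> span (P ` B j)"
        using \<open>P ` T j \<subseteq> {0}\<close> span_superset[of "P ` B j"] span_zero[of "P ` B j"] by auto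
    qed
    finally show "P ` A j \<subseteq> span (P ` B j)" .
  next
    fix S assume "S \<subseteq> C"
    then have "S \<subseteq> span E" using E(2) by (rule order_trans)
    show "dim (P ` S) \<le> dim S" by (rule dim_linear_image_le[OF P(1) E(1) \<open>S \<subseteq> span E\<close>])
    have "dim S \<le> dim (P ` S) + card W"
      by (rule dim_le_dim_linear_image_add_card[OF P(1) E(1) \<open>S \<subseteq> span E\<close> \<open>finite W\<close> P(3)])
    then show "dim S \<le> dim (P ` S) + (\<Sum>j\<in>J. dim (A j \<union> B j) - dim (B j))"
      using card_W by linarith
  qed
qed

end

interpretation fscale: vector_space "fscale :: 'a::field \<Rightarrow> (nat \<Rightarrow> 'a) \<Rightarrow> nat \<Rightarrow> 'a"
  by unfold_locales (auto simp: fscale_def fun_eq_iff algebra_simps)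

lemma subspace_coord_space: "fscale.subspace (coord_space n :: (nat \<Rightarrow> 'a::field) set)"
  unfolding fscale.subspace_def coord_space_def by (auto simp: fscale_def)

lemma sum_fun_apply: "(\<Sum>a\<in>A. f a) x = (\<Sum>a\<in>A. f a x)"
  by (induction A rule: infinite_finite_induct) auto

lemma coord_space_subset_span_unit_vectors:
  "coord_space n \<subseteq> fscale.span ((\<lambda>i j. if j = i then 1 else 0 :: 'a::field) ` {..<n})"
  (is "_ \<subseteq> fscale.span (?e ` _)")
proof
  fix x :: "nat \<Rightarrow> 'a" assume "x \<in> coord_space n"
  then have "x = (\<Sum>i<n. fscale (x i) (?e i))"
    by (auto simp: fun_eq_iff coord_space_def sum_fun_apply fscale_def if_distrib sum.delta
        cong: if_cong)
  also have "\<dots> \<in> fscale.span (?e ` {..<n})"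
    by (intro fscale.span_sum fscale.span_scale fscale.span_base) auto
  finally show "x \<in> fscale.span (?e ` {..<n})" .
qed


lemma weakly_representable_approx_with_vanishing_conditionals:
  fixes F :: "'a::field itself" and D :: "('n \<times> 'n set) set"
  assumes "weakly_representable F N g" and "finite D" and "D \<subseteq> N \<times> Pow N"
  shows "\<exists>f. weakly_representable F N f \<and>
      (\<forall>\<beta>\<subseteq>N. \<bar>f \<beta> - g \<beta>\<bar> \<le> (\<Sum>(k, \<alpha>)\<in>D. cond_val g {k} \<alpha>)) \<and>
      (\<forall>(k, \<alpha>)\<in>D. cond_val f {k} \<alpha> = 0)"
proof -
  obtain c n and U :: "'n \<Rightarrow> (nat \<Rightarrow> 'a) set" where "c > 0"
    and U: "\<And>i. i \<in> N \<Longrightarrow> fscale.subspace (U i) \<and> U i \<subseteq> coord_space n"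
    and dim_U: "\<And>\<alpha>. \<alpha> \<subseteq> N \<Longrightarrow> c * g \<alpha> = real (fscale.dim (\<Union>i\<in>\<alpha>. U i))"
    using assms(1) unfolding weakly_representable_def representable_def by metis
  define E :: "(nat \<Rightarrow> 'a) set" where "E = (\<lambda>i j. if j = i then 1 else 0) ` {..<n}"
  have "finite E" unfolding E_def by simp
  have C: "coord_space n \<subseteq> fscale.span E"
    unfolding E_def by (rule coord_space_subset_span_unit_vectors)
  define Y where "Y \<alpha> = (\<Union>i\<in>\<alpha>. U i)" for \<alpha>
  have Y_coord: "Y \<alpha> \<subseteq> coord_space n" if "\<alpha> \<subseteq> N" for \<alpha>
    using U that unfolding Y_def by blast
  have D_coord: "U (fst \<delta>) \<union> Y (snd \<delta>) \<subseteq> coord_space n" if "\<delta> \<in> D" for \<delta>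
  proof -
    have "fst \<delta> \<in> N" "snd \<delta> \<subseteq> N" using subsetD[OF assms(3) that] by (auto simp: mem_Times_iff)
    then show ?thesis using U Y_coord by blast
  qed
  let ?defect = "\<Sum>\<delta>\<in>D. fscale.dim (U (fst \<delta>) \<union> Y (snd \<delta>)) - fscale.dim (Y (snd \<delta>))"
  obtain P where "Vector_Spaces.linear fscale fscale P" "P ` coord_space n \<subseteq> coord_space n"
      and collapse: "\<And>\<delta>. \<delta> \<in> D \<Longrightarrow> P ` U (fst \<delta>) \<subseteq> fscale.span (P ` Y (snd \<delta>))"
      and dim_image: "\<And>S. S \<subseteq> coord_space n \<Longrightarrow> fscale.dim (P ` S) \<le> fscale.dim S"
      and dim_defect: "\<And>S. S \<subseteq> coord_space n \<Longrightarrow> fscale.dim S \<le> fscale.dim (P ` S) + ?defect"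
  proof (rule fscale.exists_linear_collapse[where A = "\<lambda>\<delta>. U (fst \<delta>)" and B = "\<lambda>\<delta>. Y (snd \<delta>)",
          OF \<open>finite E\<close> C subspace_coord_space \<open>finite D\<close> D_coord])
    fix P assume "Vector_Spaces.linear fscale fscale P" "P ` coord_space n \<subseteq> coord_space n"
      "\<And>\<delta>. \<delta> \<in> D \<Longrightarrow> P ` U (fst \<delta>) \<subseteq> fscale.span (P ` Y (snd \<delta>))"
      "\<And>S. S \<subseteq> coord_space n \<Longrightarrow> fscale.dim (P ` S) \<le> fscale.dim S"
      "\<And>S. S \<subseteq> coord_space n \<Longrightarrow> fscale.dim S \<le> fscale.dim (P ` S) + ?defect"
    then show thesis by (rule that)
  qed
  interpret pair: vector_space_pair fscale fscale ..
  define f where "f \<beta> = real (fscale.dim (P ` Y \<beta>)) / c" for \<beta>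
  have "weakly_representable F N f"
    unfolding weakly_representable_def representable_def
  proof (intro exI conjI ballI allI impI)
    show "c > 0" by fact
    fix i assume "i \<in> N"
    then show "fscale.subspace (P ` U i)" and "P ` U i \<subseteq> coord_space n"
      using U \<open>P ` coord_space n \<subseteq> coord_space n\<close>
        pair.linear_subspace_image[OF \<open>Vector_Spaces.linear fscale fscale P\<close>] by blast+
  next
    fix \<beta> :: "'n set"
    show "c * f \<beta> = real (fscale.dim (\<Union>i\<in>\<beta>. P ` U i))"
      using \<open>c > 0\<close> by (simp add: f_def Y_def image_UN)
  qed
  moreover have "c * cond_val g {k} \<alpha> =
      real (fscale.dim (U k \<union> Y \<alpha>) - fscale.dim (Y \<alpha>))" if "(k, \<alpha>) \<in> D" for k \<alpha>
  proof -
    have "k \<in> N" "\<alpha> \<subseteq> N" using that assms(3) by auto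
    have "U k \<union> Y \<alpha> \<subseteq> fscale.span E" using order_trans[OF D_coord[OF that] C] by simp
    then have "fscale.dim (Y \<alpha>) \<le> fscale.dim (U k \<union> Y \<alpha>)"
      by (rule fscale.dim_mono_in_span[OF \<open>finite E\<close>]) blast
    moreover have "Y ({k} \<union> \<alpha>) = U k \<union> Y \<alpha>" unfolding Y_def by blast
    ultimately show ?thesis
      using dim_U[of "{k} \<union> \<alpha>"] dim_U[of \<alpha>] \<open>k \<in> N\<close> \<open>\<alpha> \<subseteq> N\<close>
      by (simp add: cond_val_def right_diff_distrib of_nat_diff Y_def)
  qed
  then have defect_eq: "real ?defect = c * (\<Sum>(k, \<alpha>)\<in>D. cond_val g {k} \<alpha>)"
    by (simp add: sum_distrib_left split_beta)
  have "\<bar>f \<beta> - g \<beta>\<bar> \<le> (\<Sum>(k, \<alpha>)\<in>D. cond_val g {k} \<alpha>)" if "\<beta> \<subseteq> N" for \<beta>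
  proof -
    have "c * \<bar>f \<beta> - g \<beta>\<bar> = \<bar>c * f \<beta> - c * g \<beta>\<bar>"
      using \<open>c > 0\<close> by (simp add: abs_mult flip: right_diff_distrib)
    also have "\<dots> = \<bar>real (fscale.dim (P ` Y \<beta>)) - real (fscale.dim (Y \<beta>))\<bar>"
      using \<open>c > 0\<close> dim_U[OF that] by (simp add: f_def Y_def)
    also have "\<dots> \<le> real ?defect"
      using of_nat_mono[OF dim_image[OF Y_coord[OF that]], where 'a = real]
        of_nat_mono[OF dim_defect[OF Y_coord[OF that]], where 'a = real]
      by (simp only: of_nat_add abs_le_iff) linarith
    also have "\<dots> = c * (\<Sum>(k, \<alpha>)\<in>D. cond_val g {k} \<alpha>)" by (rule defect_eq)
    finally have "c * \<bar>f \<beta> - g \<beta>\<bar> \<le> c * (\<Sum>(k, \<alpha>)\<in>D. cond_val g {k} \<alpha>)" .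
    then show ?thesis using \<open>c > 0\<close> by simp
  qed
  moreover have "cond_val f {k} \<alpha> = 0" if "(k, \<alpha>) \<in> D" for k \<alpha>
  proof -
    have "P ` Y ({k} \<union> \<alpha>) = P ` U k \<union> P ` Y \<alpha>" unfolding Y_def by blast
    then show ?thesis
      using fscale.dim_Un_eq_if_subset_span[OF collapse[OF that]] by (simp add: cond_val_def f_def)
  qed
  ultimately show ?thesis by blast
qed

lemma cond_val_tendsto:
  assumes "converges_on N g h" and "k \<in> N" and "\<alpha> \<subseteq> N"
  shows "(\<lambda>l. cond_val (g l) {k} \<alpha>) \<longlonglongrightarrow> cond_val h {k} \<alpha>"
  using assms unfolding converges_on_def cond_val_def by (intro tendsto_diff) auto

lemma converges_on_if_close:
  assumes "converges_on N g h" and "e \<longlonglongrightarrow> 0"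
    and "\<And>l \<beta>. \<beta> \<subseteq> N \<Longrightarrow> \<bar>f l \<beta> - g l \<beta>\<bar> \<le> e l"
  shows "converges_on N f h"
  unfolding converges_on_def
proof (intro allI impI)
  fix \<beta> assume "\<beta> \<subseteq> N"
  then have g: "(\<lambda>l. g l \<beta>) \<longlonglongrightarrow> h \<beta>" using assms(1) unfolding converges_on_def by blast
  show "(\<lambda>l. f l \<beta>) \<longlonglongrightarrow> h \<beta>"
  proof (rule tendsto_sandwich)
    have "g l \<beta> - e l \<le> f l \<beta>" "f l \<beta> \<le> g l \<beta> + e l" for l
      using assms(3)[OF \<open>\<beta> \<subseteq> N\<close>, of l] by (simp_all add: abs_le_iff)
    then show "\<forall>\<^sub>F l in sequentially. g l \<beta> - e l \<le> f l \<beta>"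
      and "\<forall>\<^sub>F l in sequentially. f l \<beta> \<le> g l \<beta> + e l"
      by simp_all
    show "(\<lambda>l. g l \<beta> - e l) \<longlonglongrightarrow> h \<beta>"
      using tendsto_diff[OF g assms(2)] by simp
    show "(\<lambda>l. g l \<beta> + e l) \<longlonglongrightarrow> h \<beta>"
      using tendsto_add[OF g assms(2)] by simp
  qed
qed

theorem proposition5:
  fixes N :: "'n set" and h :: "'n set \<Rightarrow> real"
    and F :: "'a::{field,finite} itself"
  assumes "finite N"
    and "almost_representable F N h"
  shows "\<exists>hs :: nat \<Rightarrow> 'n set \<Rightarrow> real.
           (\<forall>l. weakly_representable F N (hs l)) \<and>
           converges_on N hs h \<and>
           (\<forall>l. \<forall>k\<in>N. \<forall>\<alpha>\<subseteq>N. cond_val h {k} \<alpha> = 0 \<longrightarrow> cond_val (hs l) {k} \<alpha> = 0)"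
proof -
  obtain g where g: "\<And>l. weakly_representable F N (g l)" and "converges_on N g h"
    using assms(2) unfolding almost_representable_def by blast
  define \<Delta> where "\<Delta> = {(k, \<alpha>). k \<in> N \<and> \<alpha> \<subseteq> N \<and> cond_val h {k} \<alpha> = 0}"
  have "\<Delta> \<subseteq> N \<times> Pow N" unfolding \<Delta>_def by auto
  then have "finite \<Delta>" by (rule finite_subset) (simp add: assms(1))
  define e where "e l = (\<Sum>(k, \<alpha>)\<in>\<Delta>. cond_val (g l) {k} \<alpha>)" for l
  have "\<forall>l. \<exists>f. weakly_representable F N f \<and> (\<forall>\<beta>\<subseteq>N. \<bar>f \<beta> - g l \<beta>\<bar> \<le> e l) \<and>
      (\<forall>(k, \<alpha>)\<in>\<Delta>. cond_val f {k} \<alpha> = 0)"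
    unfolding e_def
    using weakly_representable_approx_with_vanishing_conditionals[OF g \<open>finite \<Delta>\<close> \<open>\<Delta> \<subseteq> N \<times> Pow N\<close>]
    by blast
  from choice[OF this] obtain hs where hs: "\<forall>l. weakly_representable F N (hs l) \<and>
      (\<forall>\<beta>\<subseteq>N. \<bar>hs l \<beta> - g l \<beta>\<bar> \<le> e l) \<and> (\<forall>(k, \<alpha>)\<in>\<Delta>. cond_val (hs l) {k} \<alpha> = 0)" ..
  have "e \<longlonglongrightarrow> (\<Sum>(k, \<alpha>)\<in>\<Delta>. cond_val h {k} \<alpha>)"
    unfolding e_def split_beta using \<open>converges_on N g h\<close>
    by (intro tendsto_sum cond_val_tendsto) (auto simp: \<Delta>_def)
  also have "(\<Sum>(k, \<alpha>)\<in>\<Delta>. cond_val h {k} \<alpha>) = 0"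
    by (intro sum.neutral) (auto simp: \<Delta>_def)
  finally have "converges_on N hs h"
    by (rule converges_on_if_close[OF \<open>converges_on N g h\<close>]) (use hs in blast)
  moreover have "cond_val (hs l) {k} \<alpha> = 0" if "k \<in> N" "\<alpha> \<subseteq> N" "cond_val h {k} \<alpha> = 0" for l k \<alpha>
  proof -
    have "(k, \<alpha>) \<in> \<Delta>" using that by (simp add: \<Delta>_def)
    with hs show ?thesis by fastforce
  qed
  ultimately show ?thesis using hs by (intro exI[of _ hs] conjI allI ballI impI) auto
qed

end
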